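(* For every $m\in\mathbb{N}$, $\eta^{m\text{-}mult}_{(2,2)}(\ell_2;c_0)=\frac m2$, where $\eta^{m\text{-}mult}_{(2,2)}(\ell_2;c_0)$ means $\eta^{m\text{-}mult}_{(2,2)}(\ell_2,\dots,\ell_2;c_0)$ with $m$ copies of $\ell_2$.
   Context: For vectors $x_1,\dots,x_n$ in a Banach space $E$ and $q>0$, $\|(x_k)_{k=1}^n\|_{w,q}:=\sup_{\varphi\in B_{E^*}}\left(\sum_{k=1}^n|\varphi(x_k)|^q\right)^{1/q}$, where $B_{E^*}$ is the closed unit ball of the dual. $\mathcal{L}(E_1,\dots,E_m;F)$ is the space of bounded $m$-linear maps. For $p,q>0$, the multilinear $m$-index of $(p,q)$-summability $\eta^{m\text{-}mult}_{(p,q)}(E_1,\dots,E_m;F)$ is the infimum of all real numbers $s$ with the property: for every $T\in\mathcal{L}(E_1,\dots,E_m;F)$ there is a constant $C\ge0$ (depending only on $m$ and $T$) such that $$\left(\sum_{k_1,\dots,k_m=1}^n\|T(x^{(1)}_{k_1},\dots,x^{(m)}_{k_m})\|^p\right)^{1/p}\le C n^{s}\prod_{i=1}^m\|(x^{(i)}_{k})_{k=1}^n\|_{w,q}$$ for all positive integers $n$ and all $x^{(i)}_k\in E_i$, $1\le k\le n$, $1\le i\le m$. *)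

theory Defs
  imports "HOL-Analysis.Analysis"
begin

definition l2 :: "(nat \<Rightarrow> real) set" where
  "l2 = {x. summable (\<lambda>j. (x j)\<^sup>2)}"

definition l2_norm :: "(nat \<Rightarrow> real) \<Rightarrow> real" where
  "l2_norm x = sqrt (\<Sum>j. (x j)\<^sup>2)"

definition c0 :: "(nat \<Rightarrow> real) set" where
  "c0 = {x. x \<longlonglongrightarrow> 0}"

definition c0_norm :: "(nat \<Rightarrow> real) \<Rightarrow> real" where
  "c0_norm x = (SUP j. \<bar>x j\<bar>)"

definition linear_on :: "(nat \<Rightarrow> real) set \<Rightarrow> ((nat \<Rightarrow> real) \<Rightarrow> real) \<Rightarrow> bool" where
  "linear_on E f \<longleftrightarrow>
     (\<forall>x\<in>E. \<forall>y\<in>E. f (\<lambda>j. x j + y j) = f x + f y) \<and> (\<forall>x\<in>E. \<forall>a::real. f (\<lambda>j. a * x j) = a * f x)"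

definition dual_ball :: "(nat \<Rightarrow> real) set \<Rightarrow> ((nat \<Rightarrow> real) \<Rightarrow> real) \<Rightarrow> ((nat \<Rightarrow> real) \<Rightarrow> real) set" where
  "dual_ball E N = {\<phi>. linear_on E \<phi> \<and> (\<forall>x\<in>E. \<bar>\<phi> x\<bar> \<le> N x)}"

text \<open>Weak q-norm of the finite family x_0, ..., x_(n-1) (indices shifted to start at 0).\<close>
definition weak_norm :: "(nat \<Rightarrow> real) set \<Rightarrow> ((nat \<Rightarrow> real) \<Rightarrow> real) \<Rightarrow> real \<Rightarrow> nat \<Rightarrow> (nat \<Rightarrow> nat \<Rightarrow> real) \<Rightarrow> real" where
  "weak_norm E N q n x = (SUP \<phi> \<in> dual_ball E N. (\<Sum>k<n. \<bar>\<phi> (x k)\<bar> powr q) powr (1/q))"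

definition tuples :: "nat \<Rightarrow> (nat \<Rightarrow> real) set \<Rightarrow> (nat \<Rightarrow> (nat \<Rightarrow> real)) set" where
  "tuples m E = {xs. (\<forall>i<m. xs i \<in> E) \<and> (\<forall>i\<ge>m. xs i = (\<lambda>_. 0))}"

text \<open>Linearity of a sequence-valued map is checked coordinatewise (vector operations are pointwise).
Bounded m-linear maps E x ... x E -> F (m copies of E).\<close>
definition bounded_mlinear ::
  "nat \<Rightarrow> (nat \<Rightarrow> real) set \<Rightarrow> ((nat \<Rightarrow> real) \<Rightarrow> real) \<Rightarrow> (nat \<Rightarrow> real) set \<Rightarrow> ((nat \<Rightarrow> real) \<Rightarrow> real)
     \<Rightarrow> ((nat \<Rightarrow> (nat \<Rightarrow> real)) \<Rightarrow> (nat \<Rightarrow> real)) \<Rightarrow> bool" where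
  "bounded_mlinear m E NE F NF T \<longleftrightarrow>
     (\<forall>xs\<in>tuples m E. T xs \<in> F) \<and>
     (\<forall>i<m. \<forall>xs\<in>tuples m E. (\<forall>j. linear_on E (\<lambda>y. T (xs(i := y)) j))) \<and>
     (\<exists>C. \<forall>xs\<in>tuples m E. NF (T xs) \<le> C * (\<Prod>i<m. NE (xs i)))"

definition eta_mult ::
  "nat \<Rightarrow> real \<Rightarrow> real \<Rightarrow> (nat \<Rightarrow> real) set \<Rightarrow> ((nat \<Rightarrow> real) \<Rightarrow> real) \<Rightarrow> (nat \<Rightarrow> real) set
     \<Rightarrow> ((nat \<Rightarrow> real) \<Rightarrow> real) \<Rightarrow> real" where
  "eta_mult m p q E NE F NF = Inf {s::real.
     \<forall>T. bounded_mlinear m E NE F NF T \<longrightarrow>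
       (\<exists>C\<ge>0. \<forall>n::nat. n \<ge> 1 \<longrightarrow>
          (\<forall>x :: nat \<Rightarrow> nat \<Rightarrow> nat \<Rightarrow> real. (\<forall>i<m. \<forall>k<n. x i k \<in> E) \<longrightarrow>
             (\<Sum>k\<in>PiE {..<m} (\<lambda>_. {..<n}). NF (T (\<lambda>i. if i < m then x i (k i) else (\<lambda>_. 0))) powr p) powr (1/p)
               \<le> C * real n powr s * (\<Prod>i<m. weak_norm E NE q n (x i))))}"

end

theory Submission
  imports Defs "HOL-Library.Nat_Bijection"
begin

text \<open>
  Upper bound: for \<open>v \<in> l2\<close> the functional \<open>y \<mapsto> <y, v> / |v|\<close> lies in the dual unit ball,
  so every \<open>|x_k|\<close> is dominated by the weak 2-norm of the family. Hence each of the \<open>n^m\<close>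
  summands is at most \<open>|T|\<close> times the product of the weak norms, and the sum contributes
  the factor \<open>n^(m/p)\<close>.

  Lower bound: the tensor map \<open>(x_1, ..., x_m) \<mapsto> (x_1(j_1) \<cdot> ... \<cdot> x_m(j_m))_j\<close>, with the
  multi-indices \<open>j \<in> \<nat>^m\<close> enumerated by \<open>\<nat>\<close>, is a bounded \<open>m\<close>-linear map into
  \<open>l2 \<subseteq> c0\<close>. On the unit vectors \<open>e_1, ..., e_n\<close>, whose weak 2-norm is at most 1 by Bessel's
  inequality, each of the \<open>n^m\<close> summands is 1; this forces \<open>n^(m/p) \<le> C n^s\<close> for all \<open>n\<close>,
  i.e. \<open>s \<ge> m/p\<close>.
\<close>

lemma l2_norm_nonneg: "x \<in> l2 \<Longrightarrow> 0 \<le> l2_norm x"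
  by (simp add: l2_norm_def l2_def suminf_nonneg)

lemma l2_norm_power2: "x \<in> l2 \<Longrightarrow> (l2_norm x)\<^sup>2 = (\<Sum>j. (x j)\<^sup>2)"
  by (simp add: l2_norm_def l2_def suminf_nonneg)

lemma l2_norm_finite_support:
  assumes "\<And>j. j \<ge> n \<Longrightarrow> x j = 0"
  shows "x \<in> l2" and "l2_norm x = sqrt (\<Sum>j<n. (x j)\<^sup>2)"
proof -
  have sums: "(\<lambda>j. (x j)\<^sup>2) sums (\<Sum>j<n. (x j)\<^sup>2)"
    by (rule sums_finite) (use assms in auto)
  then show "x \<in> l2" by (auto simp: l2_def sums_summable)
  show "l2_norm x = sqrt (\<Sum>j<n. (x j)\<^sup>2)" using sums by (simp add: l2_norm_def sums_unique[symmetric])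
qed

lemma l2_mult: "x \<in> l2 \<Longrightarrow> (\<lambda>j. a * x j) \<in> l2"
  using summable_mult[of "\<lambda>j. (x j)\<^sup>2" "a\<^sup>2"] by (simp add: l2_def power_mult_distrib)

lemma summable_mult_l2:
  assumes "x \<in> l2" "v \<in> l2"
  shows "summable (\<lambda>j. x j * v j)"
proof (rule summable_comparison_test')
  show "summable (\<lambda>j. (x j)\<^sup>2 + (v j)\<^sup>2)" using assms by (auto simp: l2_def intro: summable_add)
  show "norm (x j * v j) \<le> (x j)\<^sup>2 + (v j)\<^sup>2" for j
  proof -
    have "2 * (\<bar>x j\<bar> * \<bar>v j\<bar>) \<le> (x j)\<^sup>2 + (v j)\<^sup>2"
      using sum_squares_bound[of "\<bar>x j\<bar>" "\<bar>v j\<bar>"] by (simp add: mult.assoc)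
    moreover have "0 \<le> \<bar>x j\<bar> * \<bar>v j\<bar>" by simp
    ultimately show ?thesis unfolding real_norm_def abs_mult by linarith
  qed
qed

lemma abs_suminf_mult_le_l2_norm:
  assumes x: "x \<in> l2" and v: "v \<in> l2"
  shows "\<bar>\<Sum>j. x j * v j\<bar> \<le> l2_norm x * l2_norm v"
proof -
  have partial: "(\<Sum>j<N. x j * v j)\<^sup>2 \<le> (l2_norm x * l2_norm v)\<^sup>2" for N
  proof -
    have "(\<Sum>j<N. x j * v j)\<^sup>2 \<le> (\<Sum>j<N. (x j)\<^sup>2) * (\<Sum>j<N. (v j)\<^sup>2)"
      by (rule Cauchy_Schwarz_ineq_sum)
    also have "\<dots> \<le> (\<Sum>j. (x j)\<^sup>2) * (\<Sum>j. (v j)\<^sup>2)"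
      using x v by (intro mult_mono sum_le_suminf suminf_nonneg sum_nonneg) (auto simp: l2_def)
    finally show ?thesis using x v by (simp add: l2_norm_power2 power_mult_distrib)
  qed
  have "(\<lambda>N. (\<Sum>j<N. x j * v j)\<^sup>2) \<longlonglongrightarrow> (\<Sum>j. x j * v j)\<^sup>2"
    using summable_mult_l2[OF x v] by (intro tendsto_power summable_LIMSEQ)
  then have "(\<Sum>j. x j * v j)\<^sup>2 \<le> (l2_norm x * l2_norm v)\<^sup>2"
    by (rule LIMSEQ_le_const2) (use partial in auto)
  then show ?thesis
    using x v by (simp add: abs_le_square_iff[symmetric] l2_norm_nonneg)
qed

lemma abs_le_l2_norm:
  assumes "x \<in> l2"
  shows "\<bar>x j\<bar> \<le> l2_norm x"
proof -
  have "(\<Sum>t\<in>{j}. (x t)\<^sup>2) \<le> (\<Sum>t. (x t)\<^sup>2)"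
    using assms by (intro sum_le_suminf) (auto simp: l2_def)
  then show ?thesis unfolding l2_norm_def by (intro real_le_rsqrt) simp
qed

lemma l2_subset_c0: "l2 \<subseteq> c0"
proof
  fix x assume "x \<in> l2"
  then have "(\<lambda>j. sqrt ((x j)\<^sup>2)) \<longlonglongrightarrow> sqrt 0"
    by (intro tendsto_real_sqrt summable_LIMSEQ_zero) (simp add: l2_def)
  then show "x \<in> c0" by (simp add: c0_def tendsto_rabs_zero_iff)
qed

lemma abs_le_c0_norm:
  assumes "x \<in> c0"
  shows "\<bar>x j\<bar> \<le> c0_norm x"
proof -
  have "Bseq x" using assms by (auto simp: c0_def intro: convergent_imp_Bseq convergentI)
  then obtain K where "\<And>j. norm (x j) \<le> K" by (auto simp: Bseq_def)
  then show ?thesis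
    unfolding c0_norm_def by (intro cSUP_upper bdd_aboveI2[where M = K]) auto
qed

lemma c0_norm_nonneg: "x \<in> c0 \<Longrightarrow> 0 \<le> c0_norm x"
  using abs_le_c0_norm[of x 0] by linarith

lemma c0_norm_le_l2_norm: "x \<in> l2 \<Longrightarrow> c0_norm x \<le> l2_norm x"
  unfolding c0_norm_def by (intro cSUP_least abs_le_l2_norm) auto

lemma dual_ball_abs_le: "\<phi> \<in> dual_ball E N \<Longrightarrow> x \<in> E \<Longrightarrow> \<bar>\<phi> x\<bar> \<le> N x"
  by (simp add: dual_ball_def)

lemma zero_in_dual_ball_l2: "(\<lambda>_. 0) \<in> dual_ball l2 l2_norm"
  by (simp add: dual_ball_def linear_on_def l2_norm_nonneg)

text \<open>For \<open>l2_norm v = 0\<close> this is the zero functional, by the convention \<open>x / 0 = 0\<close>.\<close>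
definition l2_norming_functional :: "(nat \<Rightarrow> real) \<Rightarrow> (nat \<Rightarrow> real) \<Rightarrow> real" where
  "l2_norming_functional v y = (\<Sum>j. y j * v j) / l2_norm v"

lemma l2_norming_functional_in_dual_ball:
  assumes v: "v \<in> l2"
  shows "l2_norming_functional v \<in> dual_ball l2 l2_norm"
  unfolding dual_ball_def linear_on_def
proof (intro CollectI conjI ballI allI)
  fix x y assume x: "x \<in> l2" and y: "y \<in> l2"
  have "(\<Sum>j. (x j + y j) * v j) = (\<Sum>j. x j * v j) + (\<Sum>j. y j * v j)"
    using summable_mult_l2[OF x v] summable_mult_l2[OF y v]
    by (simp add: distrib_right suminf_add)
  then show "l2_norming_functional v (\<lambda>j. x j + y j) =
      l2_norming_functional v x + l2_norming_functional v y"
    by (simp add: l2_norming_functional_def add_divide_distrib)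
next
  fix x a assume x: "x \<in> l2"
  have "(\<Sum>j. a * x j * v j) = a * (\<Sum>j. x j * v j)"
    using suminf_mult[OF summable_mult_l2[OF x v], of a] by (simp add: mult.assoc)
  then show "l2_norming_functional v (\<lambda>j. a * x j) = a * l2_norming_functional v x"
    by (simp add: l2_norming_functional_def)
next
  fix x assume x: "x \<in> l2"
  show "\<bar>l2_norming_functional v x\<bar> \<le> l2_norm x"
    using abs_suminf_mult_le_l2_norm[OF x v] l2_norm_nonneg[OF v] l2_norm_nonneg[OF x]
    by (cases "l2_norm v = 0") (auto simp: l2_norming_functional_def field_simps)
qed

lemma l2_norming_functional_self:
  assumes "v \<in> l2"
  shows "l2_norming_functional v v = l2_norm v"
proof -
  have "(\<Sum>j. v j * v j) = l2_norm v * l2_norm v"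
    using l2_norm_power2[OF assms] by (simp add: power2_eq_square)
  then show ?thesis by (simp add: l2_norming_functional_def)
qed

definition unit_vec :: "nat \<Rightarrow> nat \<Rightarrow> real" where
  "unit_vec k = (\<lambda>j. if j = k then 1 else 0)"

lemma unit_vec_in_l2: "unit_vec k \<in> l2"
  by (rule l2_norm_finite_support(1)[of "Suc k"]) (simp add: unit_vec_def)

lemma dual_ball_l2_apply_finite_support:
  assumes "\<phi> \<in> dual_ball l2 l2_norm"
  shows "\<phi> (\<lambda>j. if j < n then a j else 0) = (\<Sum>k<n. a k * \<phi> (unit_vec k))"
proof -
  have add: "\<phi> (\<lambda>j. x j + y j) = \<phi> x + \<phi> y" and scale: "\<phi> (\<lambda>j. c * x j) = c * \<phi> x"
    if "x \<in> l2" "y \<in> l2" for x y c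
    using assms that by (auto simp: dual_ball_def linear_on_def)
  show ?thesis
  proof (induction n)
    case 0
    show ?case using scale[of "\<lambda>_. 0" "\<lambda>_. 0" 0] unit_vec_in_l2[of 0]
      by (simp add: l2_norm_finite_support(1)[of 0])
  next
    case (Suc n)
    have "(\<lambda>j. if j < Suc n then a j else 0) =
        (\<lambda>j. (if j < n then a j else 0) + a n * unit_vec n j)"
      by (rule ext) (simp add: unit_vec_def less_Suc_eq)
    then show ?case
      using Suc add[OF l2_norm_finite_support(1)[of n] l2_mult[OF unit_vec_in_l2]]
        scale[OF unit_vec_in_l2 unit_vec_in_l2]
      by simp
  qed
qed

lemma bdd_above_weak_norm_l2:
  assumes "q > 0" "\<forall>k<n. x k \<in> l2"
  shows "bdd_above ((\<lambda>\<phi>. (\<Sum>k<n. \<bar>\<phi> (x k)\<bar> powr q) powr (1/q)) ` dual_ball l2 l2_norm)"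
proof (rule bdd_aboveI2)
  fix \<phi> assume "\<phi> \<in> dual_ball l2 l2_norm"
  then have "(\<Sum>k<n. \<bar>\<phi> (x k)\<bar> powr q) \<le> (\<Sum>k<n. l2_norm (x k) powr q)"
    using assms dual_ball_abs_le by (intro sum_mono powr_mono2) auto
  then show "(\<Sum>k<n. \<bar>\<phi> (x k)\<bar> powr q) powr (1/q) \<le> (\<Sum>k<n. l2_norm (x k) powr q) powr (1/q)"
    using assms(1) by (intro powr_mono2) (auto intro: sum_nonneg)
qed

lemma weak_norm_l2_nonneg:
  assumes "q > 0" "\<forall>k<n. x k \<in> l2"
  shows "0 \<le> weak_norm l2 l2_norm q n x"
proof -
  have "(\<Sum>k<n. \<bar>(\<lambda>_. 0::real) (x k)\<bar> powr q) powr (1/q) \<le> weak_norm l2 l2_norm q n x"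
    unfolding weak_norm_def
    using bdd_above_weak_norm_l2[OF assms] zero_in_dual_ball_l2 by (rule cSUP_upper2) simp
  then show ?thesis by simp
qed

lemma l2_norm_le_weak_norm:
  assumes q: "q > 0" and x: "\<forall>k<n. x k \<in> l2" and k: "k < n"
  shows "l2_norm (x k) \<le> weak_norm l2 l2_norm q n x"
proof -
  let ?\<psi> = "l2_norming_functional (x k)"
  have xk: "x k \<in> l2" using x k by simp
  have "l2_norm (x k) = (\<bar>?\<psi> (x k)\<bar> powr q) powr (1/q)"
    using q l2_norm_nonneg[OF xk] by (simp add: l2_norming_functional_self[OF xk] powr_powr)
  also have "\<dots> \<le> (\<Sum>k<n. \<bar>?\<psi> (x k)\<bar> powr q) powr (1/q)"
    using q k by (intro powr_mono2 member_le_sum[where f = "\<lambda>k. \<bar>?\<psi> (x k)\<bar> powr q"]) auto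
  also have "\<dots> \<le> weak_norm l2 l2_norm q n x"
    unfolding weak_norm_def
    using bdd_above_weak_norm_l2[OF q x] l2_norming_functional_in_dual_ball[OF xk]
    by (rule cSUP_upper2) simp
  finally show ?thesis .
qed

text \<open>Bessel's inequality: testing \<open>\<phi>\<close> on \<open>(\<phi> e_0, ..., \<phi> e_(n-1), 0, ...)\<close> gives
  \<open>S \<le> sqrt S\<close> for \<open>S = \<Sum>k<n. (\<phi> e_k)^2\<close>.\<close>
lemma weak_norm_unit_vec_le_1: "weak_norm l2 l2_norm 2 n unit_vec \<le> 1"
  unfolding weak_norm_def
proof (rule cSUP_least)
  show "dual_ball l2 l2_norm \<noteq> {}" using zero_in_dual_ball_l2 by blast
next
  fix \<phi> assume \<phi>: "\<phi> \<in> dual_ball l2 l2_norm"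
  define S where "S = (\<Sum>k<n. (\<phi> (unit_vec k))\<^sup>2)"
  have S: "0 \<le> S" by (simp add: S_def sum_nonneg)
  have y: "(\<lambda>j. if j < n then \<phi> (unit_vec j) else 0) \<in> l2"
    by (rule l2_norm_finite_support(1)[of n]) simp
  have "S = \<phi> (\<lambda>j. if j < n then \<phi> (unit_vec j) else 0)"
    by (simp add: S_def dual_ball_l2_apply_finite_support[OF \<phi>] power2_eq_square)
  also have "\<dots> \<le> l2_norm (\<lambda>j. if j < n then \<phi> (unit_vec j) else 0)"
    using dual_ball_abs_le[OF \<phi> y] by (rule abs_le_D1)
  also have "\<dots> = sqrt S"
    by (subst l2_norm_finite_support(2)[of n]) (auto simp: S_def)
  finally have "S * S \<le> S * 1"
    using S mult_mono[of S "sqrt S" S "sqrt S"] by simp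
  then have "S \<le> 1"
    using S mult_le_cancel_left[of S S 1] by auto
  then show "(\<Sum>k<n. \<bar>\<phi> (unit_vec k)\<bar> powr 2) powr (1/2) \<le> 1"
    using S by (simp add: S_def powr_half_sqrt)
qed

lemma sum_powr_root_le:
  fixes f :: "'a \<Rightarrow> real"
  assumes p: "p > 0" and B: "0 \<le> B" and f: "\<And>k. k \<in> K \<Longrightarrow> 0 \<le> f k \<and> f k \<le> B"
  shows "(\<Sum>k\<in>K. f k powr p) powr (1/p) \<le> real (card K) powr (1/p) * B"
proof -
  have "(\<Sum>k\<in>K. f k powr p) \<le> (\<Sum>k\<in>K. B powr p)"
    using p f by (intro sum_mono powr_mono2) auto
  then have "(\<Sum>k\<in>K. f k powr p) powr (1/p) \<le> (real (card K) * B powr p) powr (1/p)"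
    using p by (intro powr_mono2) (auto intro: sum_nonneg)
  also have "\<dots> = real (card K) powr (1/p) * B"
    using p B by (simp add: powr_mult powr_powr)
  finally show ?thesis .
qed

lemma sum_powr_root_ge:
  fixes f :: "'a \<Rightarrow> real"
  assumes p: "p > 0" and f: "\<And>k. k \<in> K \<Longrightarrow> 1 \<le> f k"
  shows "real (card K) powr (1/p) \<le> (\<Sum>k\<in>K. f k powr p) powr (1/p)"
proof -
  have "real (card K) = (\<Sum>k\<in>K. 1 powr p)" by simp
  also have "\<dots> \<le> (\<Sum>k\<in>K. f k powr p)"
    using p f by (intro sum_mono powr_mono2) auto
  finally show ?thesis
    using p by (intro powr_mono2) auto
qed

lemma card_PiE_lessThan_powr:
  assumes "n \<ge> 1"
  shows "real (card (PiE {..<m} (\<lambda>_. {..<n}))) powr (1/p) = real n powr (real m / p)"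
  using assms by (simp add: card_PiE powr_realpow[symmetric] powr_powr)

definition has_summing_exponent ::
  "nat \<Rightarrow> real \<Rightarrow> real \<Rightarrow> (nat \<Rightarrow> real) set \<Rightarrow> ((nat \<Rightarrow> real) \<Rightarrow> real) \<Rightarrow> ((nat \<Rightarrow> real) \<Rightarrow> real)
     \<Rightarrow> ((nat \<Rightarrow> (nat \<Rightarrow> real)) \<Rightarrow> (nat \<Rightarrow> real)) \<Rightarrow> real \<Rightarrow> bool" where
  "has_summing_exponent m p q E NE NF T s \<longleftrightarrow>
     (\<exists>C\<ge>0. \<forall>n::nat. n \<ge> 1 \<longrightarrow>
        (\<forall>x :: nat \<Rightarrow> nat \<Rightarrow> nat \<Rightarrow> real. (\<forall>i<m. \<forall>k<n. x i k \<in> E) \<longrightarrow>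
           (\<Sum>k\<in>PiE {..<m} (\<lambda>_. {..<n}). NF (T (\<lambda>i. if i < m then x i (k i) else (\<lambda>_. 0))) powr p) powr (1/p)
             \<le> C * real n powr s * (\<Prod>i<m. weak_norm E NE q n (x i))))"

lemma eta_mult_eq_Inf:
  "eta_mult m p q E NE F NF =
     Inf {s. \<forall>T. bounded_mlinear m E NE F NF T \<longrightarrow> has_summing_exponent m p q E NE NF T s}"
  by (simp add: eta_mult_def has_summing_exponent_def)

lemma bounded_mlinear_l2_c0_has_summing_exponent:
  assumes p: "p > 0" and q: "q > 0" and T: "bounded_mlinear m l2 l2_norm c0 c0_norm T"
  shows "has_summing_exponent m p q l2 l2_norm c0_norm T (real m / p)"
proof -
  from T obtain C0 where C0: "\<And>xs. xs \<in> tuples m l2 \<Longrightarrow> c0_norm (T xs) \<le> C0 * (\<Prod>i<m. l2_norm (xs i))"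
    and Tc0: "\<And>xs. xs \<in> tuples m l2 \<Longrightarrow> T xs \<in> c0"
    unfolding bounded_mlinear_def by blast
  define C where "C = max C0 0"
  have "(\<Sum>k\<in>PiE {..<m} (\<lambda>_. {..<n}). c0_norm (T (\<lambda>i. if i < m then x i (k i) else (\<lambda>_. 0))) powr p) powr (1/p)
      \<le> C * real n powr (real m / p) * (\<Prod>i<m. weak_norm l2 l2_norm q n (x i))"
    if n: "n \<ge> 1" and x: "\<forall>i<m. \<forall>k<n. x i k \<in> l2" for n x
  proof -
    define W where "W = (\<Prod>i<m. weak_norm l2 l2_norm q n (x i))"
    have W: "0 \<le> W" unfolding W_def using q x by (intro prod_nonneg weak_norm_l2_nonneg) auto
    have "0 \<le> c0_norm (T xs) \<and> c0_norm (T xs) \<le> C * W"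
      if "k \<in> PiE {..<m} (\<lambda>_. {..<n})" and xs: "xs = (\<lambda>i. if i < m then x i (k i) else (\<lambda>_. 0))" for k xs
    proof
      have k: "i < m \<Longrightarrow> k i < n" for i using that by auto
      have xs_l2: "i < m \<Longrightarrow> xs i \<in> l2" for i using x k by (simp add: xs)
      have tuple: "xs \<in> tuples m l2" using xs_l2 by (simp add: tuples_def xs)
      show "0 \<le> c0_norm (T xs)" using Tc0[OF tuple] by (rule c0_norm_nonneg)
      have "0 \<le> (\<Prod>i<m. l2_norm (xs i))" using xs_l2 by (intro prod_nonneg l2_norm_nonneg) auto
      then have "C0 * (\<Prod>i<m. l2_norm (xs i)) \<le> C * (\<Prod>i<m. l2_norm (xs i))"
        by (intro mult_right_mono) (simp_all add: C_def)
      with C0[OF tuple] have "c0_norm (T xs) \<le> C * (\<Prod>i<m. l2_norm (xs i))" by linarith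
      also have "\<dots> \<le> C * W"
        unfolding W_def using q x k xs_l2
        by (intro mult_left_mono prod_mono conjI l2_norm_nonneg) (auto simp: xs C_def intro: l2_norm_le_weak_norm)
      finally show "c0_norm (T xs) \<le> C * W" .
    qed
    then have "(\<Sum>k\<in>PiE {..<m} (\<lambda>_. {..<n}). c0_norm (T (\<lambda>i. if i < m then x i (k i) else (\<lambda>_. 0))) powr p) powr (1/p)
        \<le> real (card (PiE {..<m} (\<lambda>_. {..<n}))) powr (1/p) * (C * W)"
      using p W by (intro sum_powr_root_le) (auto simp: C_def)
    then show ?thesis
      using n by (simp add: card_PiE_lessThan_powr W_def mult.assoc mult.left_commute)
  qed
  then show ?thesis
    unfolding has_summing_exponent_def by (intro exI[of _ C]) (auto simp: C_def)
qed

lemma list_decode_less: "a \<in> set (list_decode j) \<Longrightarrow> a < j"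
proof (induction j arbitrary: a rule: list_decode.induct)
  case (2 n)
  obtain b c where bc: "prod_decode n = (b, c)" by (cases "prod_decode n")
  then have "n = prod_encode (b, c)" by (metis prod_decode_inverse)
  then have "b \<le> n" "c \<le> n" using le_prod_encode_1 le_prod_encode_2 by auto
  with 2 bc show ?case by fastforce
qed simp

text \<open>The multi-index \<open>(j_0, ..., j_(m-1))\<close> is represented by the code
  \<open>list_encode [j_0, ..., j_(m-1)]\<close>; codes of lists of other lengths get the entry 0.\<close>
definition tensor_map :: "nat \<Rightarrow> (nat \<Rightarrow> nat \<Rightarrow> real) \<Rightarrow> nat \<Rightarrow> real" where
  "tensor_map m xs j = (if length (list_decode j) = m then \<Prod>i<m. xs i (list_decode j ! i) else 0)"

lemma sum_tensor_map_power2_le: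
  assumes xs: "\<forall>i<m. xs i \<in> l2"
  shows "(\<Sum>j<N. (tensor_map m xs j)\<^sup>2) \<le> (\<Prod>i<m. l2_norm (xs i))\<^sup>2"
proof -
  define J where "J = {j\<in>{..<N}. length (list_decode j) = m}"
  define h where "h j = restrict (\<lambda>i. list_decode j ! i) {..<m}" for j
  define g where "g t = (\<Prod>i<m. (xs i (t i))\<^sup>2)" for t :: "nat \<Rightarrow> nat"
  have inj: "inj_on h J"
  proof (rule inj_onI)
    fix j1 j2 assume j: "j1 \<in> J" "j2 \<in> J" and eq: "h j1 = h j2"
    have "list_decode j1 ! i = list_decode j2 ! i" if "i < m" for i
      using fun_cong[OF eq, of i] that by (simp add: h_def)
    with j have "list_decode j1 = list_decode j2"
      by (intro nth_equalityI) (auto simp: J_def)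
    then show "j1 = j2" by (simp add: list_decode_eq)
  qed
  have image: "h ` J \<subseteq> PiE {..<m} (\<lambda>_. {..<N})"
  proof (rule image_subsetI)
    fix j assume j: "j \<in> J"
    have "list_decode j ! i < N" if "i < m" for i
      using that j list_decode_less[of "list_decode j ! i" j] by (auto simp: J_def)
    then show "h j \<in> PiE {..<m} (\<lambda>_. {..<N})" by (simp add: h_def)
  qed
  have "(\<Sum>j<N. (tensor_map m xs j)\<^sup>2) = (\<Sum>j\<in>J. g (h j))"
    unfolding J_def by (subst sum.inter_filter) (auto simp: tensor_map_def g_def h_def prod_power_distrib intro!: sum.cong)
  also have "\<dots> = (\<Sum>t\<in>h ` J. g t)"
    using inj by (simp add: sum.reindex)
  also have "\<dots> \<le> (\<Sum>t\<in>PiE {..<m} (\<lambda>_. {..<N}). g t)"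
    using image by (intro sum_mono2) (auto simp: g_def finite_PiE intro: prod_nonneg)
  also have "\<dots> = (\<Prod>i<m. \<Sum>t<N. (xs i t)\<^sup>2)"
    unfolding g_def by (rule prod_sum_PiE[symmetric]) auto
  also have "\<dots> \<le> (\<Prod>i<m. (l2_norm (xs i))\<^sup>2)"
    using xs by (intro prod_mono conjI sum_nonneg) (auto simp: l2_norm_power2 l2_def intro: sum_le_suminf)
  finally show ?thesis by (simp add: prod_power_distrib)
qed

lemma tensor_map_in_l2:
  assumes xs: "\<forall>i<m. xs i \<in> l2"
  shows "tensor_map m xs \<in> l2" and "l2_norm (tensor_map m xs) \<le> (\<Prod>i<m. l2_norm (xs i))"
proof -
  have sm: "summable (\<lambda>j. (tensor_map m xs j)\<^sup>2)"
    using sum_tensor_map_power2_le[OF xs] by (intro summableI_nonneg_bounded) auto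
  then show "tensor_map m xs \<in> l2" by (simp add: l2_def)
  have "(\<Sum>j. (tensor_map m xs j)\<^sup>2) \<le> (\<Prod>i<m. l2_norm (xs i))\<^sup>2"
    using sm sum_tensor_map_power2_le[OF xs] by (rule suminf_le_const)
  moreover have "0 \<le> (\<Prod>i<m. l2_norm (xs i))"
    using xs by (intro prod_nonneg l2_norm_nonneg) auto
  ultimately show "l2_norm (tensor_map m xs) \<le> (\<Prod>i<m. l2_norm (xs i))"
    unfolding l2_norm_def[of "tensor_map m xs"] by (intro real_le_lsqrt)
qed

lemma tensor_map_fun_upd:
  assumes "i < m"
  shows "tensor_map m (xs(i := y)) j = (if length (list_decode j) = m then
      y (list_decode j ! i) * (\<Prod>i'\<in>{..<m} - {i}. xs i' (list_decode j ! i')) else 0)"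
proof -
  have "(\<Prod>i'<m. (xs(i := y)) i' (list_decode j ! i')) =
      y (list_decode j ! i) * (\<Prod>i'\<in>{..<m} - {i}. (xs(i := y)) i' (list_decode j ! i'))"
    using assms by (subst prod.remove[of _ i]) auto
  also have "(\<Prod>i'\<in>{..<m} - {i}. (xs(i := y)) i' (list_decode j ! i')) =
      (\<Prod>i'\<in>{..<m} - {i}. xs i' (list_decode j ! i'))"
    by (intro prod.cong) auto
  finally show ?thesis by (simp add: tensor_map_def)
qed

lemma bounded_mlinear_tensor_map: "bounded_mlinear m l2 l2_norm c0 c0_norm (tensor_map m)"
  unfolding bounded_mlinear_def
proof (intro conjI ballI allI impI)
  fix xs assume "xs \<in> tuples m l2"
  then show "tensor_map m xs \<in> c0"
    using tensor_map_in_l2(1) l2_subset_c0 by (auto simp: tuples_def)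
next
  fix i j xs assume "i < m"
  then show "linear_on l2 (\<lambda>y. tensor_map m (xs(i := y)) j)"
    unfolding linear_on_def tensor_map_fun_upd[OF \<open>i < m\<close>] by (auto simp: algebra_simps)
next
  have "c0_norm (tensor_map m xs) \<le> (\<Prod>i<m. l2_norm (xs i))" if "xs \<in> tuples m l2" for xs
  proof -
    from that have xs: "\<forall>i<m. xs i \<in> l2" by (simp add: tuples_def)
    show ?thesis
      using c0_norm_le_l2_norm[OF tensor_map_in_l2(1)[OF xs]] tensor_map_in_l2(2)[OF xs] by linarith
  qed
  then show "\<exists>C. \<forall>xs\<in>tuples m l2. c0_norm (tensor_map m xs) \<le> C * (\<Prod>i<m. l2_norm (xs i))"
    by (intro exI[of _ 1]) simp
qed

lemma c0_norm_tensor_map_unit_vec_ge_1: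
  assumes "k \<in> PiE {..<m} (\<lambda>_. {..<n})"
  shows "1 \<le> c0_norm (tensor_map m (\<lambda>i. if i < m then unit_vec (k i) else (\<lambda>_. 0)))"
proof -
  let ?xs = "\<lambda>i. if i < m then unit_vec (k i) else (\<lambda>_. 0)"
  have "tensor_map m ?xs \<in> c0"
    using tensor_map_in_l2(1) l2_subset_c0 unit_vec_in_l2 by auto
  from abs_le_c0_norm[OF this, of "list_encode (map k [0..<m])"] show ?thesis
    by (simp add: tensor_map_def unit_vec_def)
qed

lemma exponent_le_of_powr_bound:
  fixes a s C :: real
  assumes bound: "\<And>n::nat. n \<ge> 1 \<Longrightarrow> real n powr a \<le> C * real n powr s"
  shows "a \<le> s"
proof (rule ccontr)
  assume "\<not> a \<le> s"
  then have "(\<lambda>n. C * real n powr (s - a)) \<longlonglongrightarrow> C * 0"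
    by (intro tendsto_mult tendsto_const tendsto_neg_powr filterlim_real_sequentially) simp
  moreover have "\<forall>n\<ge>1. 1 \<le> C * real n powr (s - a)"
    using bound by (simp add: powr_diff field_simps)
  ultimately have "1 \<le> C * 0"
    by (intro LIMSEQ_le_const) auto
  then show False by simp
qed

lemma tensor_map_summing_exponent_ge:
  assumes p: "p > 0" and s: "has_summing_exponent m p 2 l2 l2_norm c0_norm (tensor_map m) s"
  shows "real m / p \<le> s"
proof -
  from s obtain C where C: "C \<ge> 0" and bound: "\<And>n x. n \<ge> 1 \<Longrightarrow> \<forall>i<m. \<forall>k<n. x i k \<in> l2 \<Longrightarrow>
      (\<Sum>k\<in>PiE {..<m} (\<lambda>_. {..<n}). c0_norm (tensor_map m (\<lambda>i. if i < m then x i (k i) else (\<lambda>_. 0))) powr p) powr (1/p)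
        \<le> C * real n powr s * (\<Prod>i<m. weak_norm l2 l2_norm 2 n (x i))"
    unfolding has_summing_exponent_def by blast
  show ?thesis
  proof (rule exponent_le_of_powr_bound)
    fix n :: nat assume n: "n \<ge> 1"
    have "real n powr (real m / p) = real (card (PiE {..<m} (\<lambda>_. {..<n}))) powr (1/p)"
      using n by (rule card_PiE_lessThan_powr[symmetric])
    also have "\<dots> \<le> (\<Sum>k\<in>PiE {..<m} (\<lambda>_. {..<n}).
        c0_norm (tensor_map m (\<lambda>i. if i < m then unit_vec (k i) else (\<lambda>_. 0))) powr p) powr (1/p)"
      using p c0_norm_tensor_map_unit_vec_ge_1 by (rule sum_powr_root_ge)
    also have "\<dots> \<le> C * real n powr s * (\<Prod>i<m. weak_norm l2 l2_norm 2 n unit_vec)"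
      using bound[OF n, of "\<lambda>_. unit_vec"] by (simp add: unit_vec_in_l2)
    also have "\<dots> \<le> C * real n powr s"
      using C weak_norm_unit_vec_le_1 weak_norm_l2_nonneg[of 2 n unit_vec]
      by (intro mult_right_le_one_le prod_le_1 mult_nonneg_nonneg) (auto simp: unit_vec_in_l2)
    finally show "real n powr (real m / p) \<le> C * real n powr s" .
  qed
qed

theorem eta_mult_l2_c0:
  assumes "p > 0"
  shows "eta_mult m p 2 l2 l2_norm c0 c0_norm = real m / p"
  unfolding eta_mult_eq_Inf
proof (rule cInf_eq_minimum)
  show "real m / p \<in> {s. \<forall>T. bounded_mlinear m l2 l2_norm c0 c0_norm T \<longrightarrow>
      has_summing_exponent m p 2 l2 l2_norm c0_norm T s}"
    using assms bounded_mlinear_l2_c0_has_summing_exponent by simp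
  fix s assume "s \<in> {s. \<forall>T. bounded_mlinear m l2 l2_norm c0 c0_norm T \<longrightarrow>
      has_summing_exponent m p 2 l2 l2_norm c0_norm T s}"
  then show "real m / p \<le> s"
    using assms bounded_mlinear_tensor_map tensor_map_summing_exponent_ge by blast
qed

theorem mainTheorem3:
  fixes m :: nat
  shows "eta_mult m 2 2 l2 l2_norm c0 c0_norm = real m / 2"
  by (rule eta_mult_l2_c0) simp

end
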